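(* Let $G$ be a 2-arc-colored directed multigraph. If $C$ is a minimal PC Euler subgraph of $G$, then for every vertex $v\in V(C)$, $d^+_{1,C}(v)\le 1$ and $d^+_{2,C}(v)\le 1$.
   Context: $G$ has an arbitrary arc coloring $\phi:A(G)\to\{1,2\}$. Trails are directed walks without repeated arcs; a closed trail is properly colored (PC) if every two consecutive arcs, including the last and first arcs, have different colors. A (multi)digraph is PC Euler if it has a PC closed trail containing all of its arcs. A PC Euler subgraph of $G$ is a subgraph (with at least one arc) that is PC Euler; it is minimal if no proper subgraph of it is PC Euler. $d^+_{i,C}(v)$ is the number of arcs of color $i$ in $C$ leaving $v$. *)

theory Defs
  imports Main
begin

(* A directed multigraph: arcs are identifiers of type 'e with tail function tail
   and head function head (parallel arcs and loops allowed).  A subgraph is given by its arc set. *)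

definition pc_closed_trail :: "('e \<Rightarrow> 'v) \<Rightarrow> ('e \<Rightarrow> 'v) \<Rightarrow> ('e \<Rightarrow> nat) \<Rightarrow> 'e list \<Rightarrow> bool" where
  "pc_closed_trail tail head col T \<longleftrightarrow>
     T \<noteq> [] \<and> distinct T \<and>
     (\<forall>i < length T. head (T ! i) = tail (T ! (Suc i mod length T)) \<and>
                      col (T ! i) \<noteq> col (T ! (Suc i mod length T)))"

definition pc_euler :: "('e \<Rightarrow> 'v) \<Rightarrow> ('e \<Rightarrow> 'v) \<Rightarrow> ('e \<Rightarrow> nat) \<Rightarrow> 'e set \<Rightarrow> bool" where
  "pc_euler tail head col C \<longleftrightarrow> C \<noteq> {} \<and> (\<exists>T. pc_closed_trail tail head col T \<and> set T = C)"

definition minimal_pc_euler_subgraph ::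
  "'e set \<Rightarrow> ('e \<Rightarrow> 'v) \<Rightarrow> ('e \<Rightarrow> 'v) \<Rightarrow> ('e \<Rightarrow> nat) \<Rightarrow> 'e set \<Rightarrow> bool" where
  "minimal_pc_euler_subgraph A tail head col C \<longleftrightarrow>
     C \<subseteq> A \<and> pc_euler tail head col C \<and> (\<forall>C'. C' \<subset> C \<longrightarrow> \<not> pc_euler tail head col C')"

definition out_deg_col :: "('e \<Rightarrow> 'v) \<Rightarrow> ('e \<Rightarrow> nat) \<Rightarrow> 'e set \<Rightarrow> nat \<Rightarrow> 'v \<Rightarrow> nat" where
  "out_deg_col tail col C i v = card {a \<in> C. tail a = v \<and> col a = i}"

definition verts_of :: "('e \<Rightarrow> 'v) \<Rightarrow> ('e \<Rightarrow> 'v) \<Rightarrow> 'e set \<Rightarrow> 'v set" where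
  "verts_of tail head C = tail ` C \<union> head ` C"

end

theory Submission
  imports Defs
begin

text \<open>If two arcs of a PC closed trail leave the same vertex with the same colour, the part of
  the trail from the first of them up to (excluding) the second is again a PC closed trail.
  Since the trail's arcs are distinct, this shorter trail misses the second arc, contradicting
  minimality; so a minimal PC Euler subgraph has at most one arc of each colour leaving any
  vertex.\<close>

lemma pc_closed_trail_segment:
  assumes T: "pc_closed_trail tail head col T"
    and ij: "i < j" "j < length T"
    and same_tail: "tail (T ! i) = tail (T ! j)"
    and same_col: "col (T ! i) = col (T ! j)"
  shows "pc_closed_trail tail head col (take (j - i) (drop i T))"
proof -
  let ?S = "take (j - i) (drop i T)"
  have len: "length ?S = j - i" using ij by simp
  have nth: "\<And>k. k < j - i \<Longrightarrow> ?S ! k = T ! (i + k)" using ij by simp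
  have step: "\<And>k. k < length T \<Longrightarrow> head (T ! k) = tail (T ! (Suc k mod length T)) \<and>
       col (T ! k) \<noteq> col (T ! (Suc k mod length T))"
    using T unfolding pc_closed_trail_def by blast
  have "head (?S ! k) = tail (?S ! (Suc k mod length ?S)) \<and>
        col (?S ! k) \<noteq> col (?S ! (Suc k mod length ?S))" if k: "k < length ?S" for k
  proof (cases "Suc k < j - i")
    case True
    then have "Suc (i + k) mod length T = Suc (i + k)" using ij by simp
    then show ?thesis using step[of "i + k"] True ij k len nth[of k] nth[of "Suc k"] by simp
  next
    case False
    then have last: "Suc k = j - i" using k len by simp
    then have "Suc (i + k) mod length T = j" and "Suc k mod length ?S = 0"
      using ij len by simp_all
    then show ?thesis
      using step[of "i + k"] ij k nth[of k] nth[of 0] same_tail same_col last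
      by (simp add: add.commute)
  qed
  moreover have "?S \<noteq> []" using ij by simp
  moreover have "distinct ?S" using T unfolding pc_closed_trail_def by simp
  ultimately show ?thesis unfolding pc_closed_trail_def by blast
qed

lemma pc_euler_psubset_if_repeated_out_colour:
  assumes T: "pc_closed_trail tail head col T"
    and ij: "i < j" "j < length T"
    and "tail (T ! i) = tail (T ! j)" and "col (T ! i) = col (T ! j)"
  shows "\<exists>C'. C' \<subset> set T \<and> pc_euler tail head col C'"
proof (intro exI conjI)
  let ?S = "take (j - i) (drop i T)"
  have "distinct T" using T unfolding pc_closed_trail_def by blast
  have "T ! j \<notin> set ?S"
  proof
    assume "T ! j \<in> set ?S"
    then obtain k where k: "k < j - i" "T ! (i + k) = T ! j" using ij by (auto simp: in_set_conv_nth)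
    with \<open>distinct T\<close> ij have "i + k = j" by (simp add: nth_eq_iff_index_eq)
    with k show False by simp
  qed
  moreover have "set ?S \<subseteq> set T" by (meson set_drop_subset set_take_subset subset_trans)
  moreover have "T ! j \<in> set T" using ij by simp
  ultimately show "set ?S \<subset> set T" by blast
  show "pc_euler tail head col (set ?S)"
    using pc_closed_trail_segment[OF assms] ij unfolding pc_euler_def by auto
qed

lemma minimal_pc_euler_subgraph_out_colour_unique:
  assumes min: "minimal_pc_euler_subgraph A tail head col C"
    and "a \<in> C" "b \<in> C" "tail a = tail b" "col a = col b"
  shows "a = b"
proof (rule ccontr)
  assume "a \<noteq> b"
  obtain T where T: "pc_closed_trail tail head col T" and C: "set T = C"
    using min unfolding minimal_pc_euler_subgraph_def pc_euler_def by blast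
  obtain p q where "p < length T" "T ! p = a" "q < length T" "T ! q = b"
    using \<open>a \<in> C\<close> \<open>b \<in> C\<close> C by (metis in_set_conv_nth)
  moreover from this \<open>a \<noteq> b\<close> have "p \<noteq> q" by blast
  ultimately obtain i j where
    "i < j" "j < length T" "tail (T ! i) = tail (T ! j)" "col (T ! i) = col (T ! j)"
    using assms(4,5) by (metis linorder_neq_iff)
  then obtain C' where "C' \<subset> C" "pc_euler tail head col C'"
    using pc_euler_psubset_if_repeated_out_colour[OF T] C by blast
  with min show False unfolding minimal_pc_euler_subgraph_def by blast
qed

lemma minimal_pc_euler_subgraph_out_deg_col_le_1:
  assumes "minimal_pc_euler_subgraph A tail head col C"
  shows "out_deg_col tail col C c v \<le> 1"
proof (cases "finite {a \<in> C. tail a = v \<and> col a = c}")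
  case True
  then show ?thesis unfolding out_deg_col_def One_nat_def card_le_Suc0_iff_eq[OF True]
    using minimal_pc_euler_subgraph_out_colour_unique[OF assms] by auto
qed (simp add: out_deg_col_def)

text \<open>The bound holds for every colour.\<close>

theorem lemma2:
  fixes A :: "'e set" and tail head :: "'e \<Rightarrow> 'v" and col :: "'e \<Rightarrow> nat" and C :: "'e set"
  assumes "finite A"
    and "col ` A \<subseteq> {1, 2}"
    and "minimal_pc_euler_subgraph A tail head col C"
  shows "\<forall>v \<in> verts_of tail head C. out_deg_col tail col C 1 v \<le> 1 \<and> out_deg_col tail col C 2 v \<le> 1"
  using minimal_pc_euler_subgraph_out_deg_col_le_1[OF assms(3)] by blast

end
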